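(* Let $\frac\pi4\le\gamma_1\le\frac\pi2$ and $\gamma_2=\frac\pi2-\gamma_1$, and for $x_3\in[-1,1]$ let $\rho(x_3)=\frac12(\Sigma_0+x_3\Sigma_3)$. Then $$\min_{x_3\in[-1,1]} g(\rho(x_3))=\frac{[1+\cos(2\gamma_1)+\sqrt2\sin\gamma_1]^2}{[3+\cos(2\gamma_1)]^2},$$ attained at $x_3=\frac{2\sin\gamma_1(\sin\gamma_1-\sqrt2)}{3+\cos(2\gamma_1)}$; this minimum value is increasing in $\gamma_1$ on $[\frac\pi4,\frac\pi2]$, so its smallest value $\frac49$ occurs at $\gamma_1=\frac\pi4$, $x_3=-\frac13$.
   Context: On two qubits, let $\sigma_1,\sigma_2,\sigma_3$ denote the Pauli matrices acting on the first qubit and $\tau_1,\tau_2,\tau_3$ those acting on the second qubit. For parameters $\gamma_1,\gamma_2$ set $u=\cos\gamma_1\cos\gamma_2$, $v=\sin\gamma_1\sin\gamma_2$, $z_1=\sin\gamma_1\cos\gamma_2$, $z_2=\cos\gamma_1\sin\gamma_2$, and define $\Sigma_0=\frac12(I+u\sigma_3+v\tau_3+z_1\sigma_1\tau_1+z_2\sigma_2\tau_2)$ and $\Sigma_3=\frac12(v\sigma_3+u\tau_3-z_2\sigma_1\tau_1-z_1\sigma_2\tau_2+\sigma_3\tau_3)$. For a two-qubit density matrix $\rho$, $g(\rho):=\max\operatorname{tr}[\rho(\rho_1\otimes\rho_2)]$ over all pure single-qubit states $\rho_1,\rho_2$. *)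

theory Defs
  imports "Jordan_Normal_Form.Matrix" "Jordan_Normal_Form.Conjugate"
begin

text \<open>Kronecker (tensor) product of matrices; the first factor acts on the first qubit
  (most significant index).\<close>
definition kron :: "complex mat \<Rightarrow> complex mat \<Rightarrow> complex mat" where
  "kron A B = mat (dim_row A * dim_row B) (dim_col A * dim_col B)
     (\<lambda>(i,j). A $$ (i div dim_row B, j div dim_col B) * B $$ (i mod dim_row B, j mod dim_col B))"

definition pauliX :: "complex mat" where
  "pauliX = mat_of_rows_list 2 [[0, 1], [1, 0]]"
definition pauliY :: "complex mat" where
  "pauliY = mat_of_rows_list 2 [[0, -\<i>], [\<i>, 0]]"
definition pauliZ :: "complex mat" where
  "pauliZ = mat_of_rows_list 2 [[1, 0], [0, -1]]"

definition sigma :: "nat \<Rightarrow> complex mat" where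
  "sigma k = kron (if k = 1 then pauliX else if k = 2 then pauliY else pauliZ) (1\<^sub>m 2)"
definition tau :: "nat \<Rightarrow> complex mat" where
  "tau k = kron (1\<^sub>m 2) (if k = 1 then pauliX else if k = 2 then pauliY else pauliZ)"

definition Sigma0 :: "real \<Rightarrow> real \<Rightarrow> complex mat" where
  "Sigma0 g1 g2 = (let u = cos g1 * cos g2; v = sin g1 * sin g2;
                       z1 = sin g1 * cos g2; z2 = cos g1 * sin g2 in
     (1/2 :: complex) \<cdot>\<^sub>m (1\<^sub>m 4 + complex_of_real u \<cdot>\<^sub>m sigma 3 + complex_of_real v \<cdot>\<^sub>m tau 3
        + complex_of_real z1 \<cdot>\<^sub>m (sigma 1 * tau 1) + complex_of_real z2 \<cdot>\<^sub>m (sigma 2 * tau 2)))"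

definition Sigma3 :: "real \<Rightarrow> real \<Rightarrow> complex mat" where
  "Sigma3 g1 g2 = (let u = cos g1 * cos g2; v = sin g1 * sin g2;
                       z1 = sin g1 * cos g2; z2 = cos g1 * sin g2 in
     (1/2 :: complex) \<cdot>\<^sub>m (complex_of_real v \<cdot>\<^sub>m sigma 3 + complex_of_real u \<cdot>\<^sub>m tau 3
        + complex_of_real (- z2) \<cdot>\<^sub>m (sigma 1 * tau 1) + complex_of_real (- z1) \<cdot>\<^sub>m (sigma 2 * tau 2)
        + sigma 3 * tau 3))"

definition pure_qubit_state :: "complex mat \<Rightarrow> bool" where
  "pure_qubit_state P \<longleftrightarrow> (\<exists>\<psi>::complex vec. \<psi> \<in> carrier_vec 2 \<and>
       (\<Sum>i<2. (cmod (\<psi> $ i))\<^sup>2) = 1 \<and>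
       P = mat 2 2 (\<lambda>(i,j). \<psi> $ i * cnj (\<psi> $ j)))"

text \<open>g(rho) = max tr[rho (rho1 (x) rho2)] over pure product states (the trace is real for
  Hermitian rho; we take the real part; the maximum exists by compactness and equals the supremum).\<close>
definition mtrace :: "complex mat \<Rightarrow> complex" where
  "mtrace A = (\<Sum>i<dim_row A. A $$ (i, i))"

definition gmax :: "complex mat \<Rightarrow> real" where
  "gmax \<rho> = (SUP PQ \<in> {(P, Q). pure_qubit_state P \<and> pure_qubit_state Q}.
               Re (mtrace (\<rho> * kron (fst PQ) (snd PQ))))"

definition rho_x3 :: "real \<Rightarrow> real \<Rightarrow> real \<Rightarrow> complex mat" where
  "rho_x3 g1 g2 x3 = (1/2 :: complex) \<cdot>\<^sub>m (Sigma0 g1 g2 + complex_of_real x3 \<cdot>\<^sub>m Sigma3 g1 g2)"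

end

theory Submission
  imports Defs
begin

(* In the computational basis rho(x3) = 1/4 (I + p s3 + q t3 + A s1t1 + B s2t2
   + x3 s3t3) with real coefficients p, q, A, B depending on gamma_1, gamma_2, x3.  For pure
   product states with Bloch vectors a, b the overlap tr[rho (rho1 (x) rho2)] is therefore
   (1 + p a3 + q b3 + A a1 b1 + B a2 b2 + x3 a3 b3)/4, so g(rho) is the supremum of this
   bilinear function over pairs of unit vectors.  For gamma_2 = pi/2 - gamma_1 we have p = q.
   - Lower bound: the symmetric pair a = b = (sqrt(1-t^2), 0, t) with a suitable t attains the
     claimed value V for EVERY x3, hence V <= g(rho(x3)) on [-1,1].
   - Upper bound at the minimiser x3*: an explicit sum-of-squares identity bounds the bilinear
     form by 1 + A + m^2/(A - x3) (m = p = q), which equals 4V exactly when x3 = x3*. *)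


section \<open>Explicit matrices in the computational basis\<close>

lemma sum_lessThan_4: "(\<Sum>i<4. f i) = f (0::nat) + f 1 + f 2 + (f 3 :: 'a::comm_monoid_add)"
  by (simp add: eval_nat_numeral)

lemma eq_mat4I:
  assumes "dim_row A = 4" "dim_col A = 4" "dim_row B = 4" "dim_col B = 4"
    "\<And>i j. i \<in> {0,1,2,3::nat} \<Longrightarrow> j \<in> {0,1,2,3} \<Longrightarrow> A $$ (i,j) = B $$ (i,j)"
  shows "A = B"
proof (rule eq_matI)
  fix i j assume "i < dim_row B" "j < dim_col B"
  then have "i \<in> {0,1,2,3}" "j \<in> {0,1,2,3}" using assms by auto
  then show "A $$ (i,j) = B $$ (i,j)" using assms by blast
qed (use assms in auto)

lemma pauliX_entries: "pauliX = mat 2 2 (\<lambda>(i,j). [[0,1],[1,0]]!i!j)"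
  by (simp add: pauliX_def mat_of_rows_list_def numeral_2_eq_2)
lemma pauliY_entries: "pauliY = mat 2 2 (\<lambda>(i,j). [[0,-\<i>],[\<i>,0]]!i!j)"
  by (simp add: pauliY_def mat_of_rows_list_def numeral_2_eq_2)
lemma pauliZ_entries: "pauliZ = mat 2 2 (\<lambda>(i,j). [[1,0],[0,-1]]!i!j)"
  by (simp add: pauliZ_def mat_of_rows_list_def numeral_2_eq_2)

definition mat4 :: "complex list list \<Rightarrow> complex mat" where
  "mat4 rs = mat_of_rows_list 4 rs"

lemma sigma1_mat: "sigma 1 = mat4 [[0,0,1,0],[0,0,0,1],[1,0,0,0],[0,1,0,0]]"
  by (rule eq_mat4I) (auto simp: mat4_def sigma_def kron_def pauliX_entries mat_of_rows_list_def)
lemma sigma2_mat: "sigma 2 = mat4 [[0,0,-\<i>,0],[0,0,0,-\<i>],[\<i>,0,0,0],[0,\<i>,0,0]]"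
  by (rule eq_mat4I) (auto simp: mat4_def sigma_def kron_def pauliY_entries mat_of_rows_list_def)
lemma sigma3_mat: "sigma 3 = mat4 [[1,0,0,0],[0,1,0,0],[0,0,-1,0],[0,0,0,-1]]"
  by (rule eq_mat4I) (auto simp: mat4_def sigma_def kron_def pauliZ_entries mat_of_rows_list_def)
lemma tau1_mat: "tau 1 = mat4 [[0,1,0,0],[1,0,0,0],[0,0,0,1],[0,0,1,0]]"
  by (rule eq_mat4I) (auto simp: mat4_def tau_def kron_def pauliX_entries mat_of_rows_list_def)
lemma tau2_mat: "tau 2 = mat4 [[0,-\<i>,0,0],[\<i>,0,0,0],[0,0,0,-\<i>],[0,0,\<i>,0]]"
  by (rule eq_mat4I) (auto simp: mat4_def tau_def kron_def pauliY_entries mat_of_rows_list_def)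
lemma tau3_mat: "tau 3 = mat4 [[1,0,0,0],[0,-1,0,0],[0,0,1,0],[0,0,0,-1]]"
  by (rule eq_mat4I) (auto simp: mat4_def tau_def kron_def pauliZ_entries mat_of_rows_list_def)

lemma mat4_mult:
  assumes "length a = 4" "length b = 4" "\<forall>r\<in>set a. length r = 4" "\<forall>r\<in>set b. length r = 4"
  shows "mat4 a * mat4 b = mat 4 4 (\<lambda>(i,j). \<Sum>k<4. a!i!k * b!k!j)"
  by (rule eq_matI) (use assms in \<open>auto simp: mat4_def mat_of_rows_list_def scalar_prod_def
      row_def col_def lessThan_atLeast0\<close>)

lemma sigma1_tau1: "sigma 1 * tau 1 = mat4 [[0,0,0,1],[0,0,1,0],[0,1,0,0],[1,0,0,0]]"
  unfolding sigma1_mat tau1_mat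
  by (subst mat4_mult, simp_all, rule eq_mat4I) (auto simp: mat4_def mat_of_rows_list_def sum_lessThan_4)
lemma sigma2_tau2: "sigma 2 * tau 2 = mat4 [[0,0,0,-1],[0,0,1,0],[0,1,0,0],[-1,0,0,0]]"
  unfolding sigma2_mat tau2_mat
  by (subst mat4_mult, simp_all, rule eq_mat4I) (auto simp: mat4_def mat_of_rows_list_def sum_lessThan_4)
lemma sigma3_tau3: "sigma 3 * tau 3 = mat4 [[1,0,0,0],[0,-1,0,0],[0,0,-1,0],[0,0,0,1]]"
  unfolding sigma3_mat tau3_mat
  by (subst mat4_mult, simp_all, rule eq_mat4I) (auto simp: mat4_def mat_of_rows_list_def sum_lessThan_4)

text \<open>The Pauli coefficients of 4 rho(x3): local fields along z on each qubit and the
  x-x and y-y correlations; the z-z correlation is x3 itself.\<close>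
definition field1 :: "real \<Rightarrow> real \<Rightarrow> real \<Rightarrow> real" where
  "field1 g1 g2 x = cos g1 * cos g2 + x * (sin g1 * sin g2)"
definition field2 :: "real \<Rightarrow> real \<Rightarrow> real \<Rightarrow> real" where
  "field2 g1 g2 x = sin g1 * sin g2 + x * (cos g1 * cos g2)"
definition corr_xx :: "real \<Rightarrow> real \<Rightarrow> real \<Rightarrow> real" where
  "corr_xx g1 g2 x = sin g1 * cos g2 - x * (cos g1 * sin g2)"
definition corr_yy :: "real \<Rightarrow> real \<Rightarrow> real \<Rightarrow> real" where
  "corr_yy g1 g2 x = cos g1 * sin g2 - x * (sin g1 * cos g2)"

lemma rho_x3_mat:
  "rho_x3 g1 g2 x = (let p = field1 g1 g2 x; q = field2 g1 g2 x; A = corr_xx g1 g2 x;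
      B = corr_yy g1 g2 x in
   mat4 [[of_real ((1+p+q+x)/4), 0, 0, of_real ((A-B)/4)],
         [0, of_real ((1+p-q-x)/4), of_real ((A+B)/4), 0],
         [0, of_real ((A+B)/4), of_real ((1-p+q-x)/4), 0],
         [of_real ((A-B)/4), 0, 0, of_real ((1-p-q+x)/4)]])"
  unfolding rho_x3_def Sigma0_def Sigma3_def Let_def sigma1_tau1 sigma2_tau2 sigma3_tau3
  unfolding sigma3_mat tau3_mat field1_def field2_def corr_xx_def corr_yy_def
  by (rule eq_mat4I) (auto simp: mat4_def mat_of_rows_list_def algebra_simps)


section \<open>Overlap with pure product states in Bloch coordinates\<close>

definition proj :: "(nat \<Rightarrow> complex) \<Rightarrow> complex mat" where
  "proj f = mat 2 2 (\<lambda>(i,j). f i * cnj (f j))"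

definition bloch1 :: "(nat \<Rightarrow> complex) \<Rightarrow> real" where "bloch1 f = 2 * Re (cnj (f 0) * f 1)"
definition bloch2 :: "(nat \<Rightarrow> complex) \<Rightarrow> real" where "bloch2 f = 2 * Im (cnj (f 0) * f 1)"
definition bloch3 :: "(nat \<Rightarrow> complex) \<Rightarrow> real" where "bloch3 f = (cmod (f 0))\<^sup>2 - (cmod (f 1))\<^sup>2"

lemma bloch_norm:
  assumes "(cmod (f 0))\<^sup>2 + (cmod (f 1))\<^sup>2 = 1"
  shows "(bloch1 f)\<^sup>2 + (bloch2 f)\<^sup>2 + (bloch3 f)\<^sup>2 = 1"
proof -
  have "(Re (cnj (f 0) * f 1))\<^sup>2 + (Im (cnj (f 0) * f 1))\<^sup>2 = (cmod (cnj (f 0) * f 1))\<^sup>2"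
    by (simp add: cmod_power2)
  also have "\<dots> = (cmod (f 0))\<^sup>2 * (cmod (f 1))\<^sup>2" by (simp add: norm_mult power_mult_distrib)
  finally have modulus: "(Re (cnj (f 0) * f 1))\<^sup>2 + (Im (cnj (f 0) * f 1))\<^sup>2
      = (cmod (f 0))\<^sup>2 * (cmod (f 1))\<^sup>2" .
  have double: "(2*u)\<^sup>2 + (2*v)\<^sup>2 = 4*(u\<^sup>2 + v\<^sup>2)" for u v :: real
    by (simp add: power2_eq_square)
  have "(bloch1 f)\<^sup>2 + (bloch2 f)\<^sup>2 = 4 * ((cmod (f 0))\<^sup>2 * (cmod (f 1))\<^sup>2)"
    unfolding bloch1_def bloch2_def double modulus ..
  then have "(bloch1 f)\<^sup>2 + (bloch2 f)\<^sup>2 + (bloch3 f)\<^sup>2 = ((cmod (f 0))\<^sup>2 + (cmod (f 1))\<^sup>2)\<^sup>2"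
    unfolding bloch3_def by (simp add: power2_eq_square algebra_simps)
  then show ?thesis using assms by simp
qed

lemma kron_proj: "kron (proj f) (proj g) = (let w = [f 0 * g 0, f 0 * g 1, f 1 * g 0, f 1 * g 1] in
   mat4 [[w!0 * cnj (w!0), w!0 * cnj (w!1), w!0 * cnj (w!2), w!0 * cnj (w!3)],
         [w!1 * cnj (w!0), w!1 * cnj (w!1), w!1 * cnj (w!2), w!1 * cnj (w!3)],
         [w!2 * cnj (w!0), w!2 * cnj (w!1), w!2 * cnj (w!2), w!2 * cnj (w!3)],
         [w!3 * cnj (w!0), w!3 * cnj (w!1), w!3 * cnj (w!2), w!3 * cnj (w!3)]])"
  unfolding Let_def by (rule eq_mat4I) (auto simp: mat4_def mat_of_rows_list_def proj_def kron_def)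

text \<open>The overlap function tr[rho(x3) (rho1 (x) rho2)] written in the Bloch vectors a, b.\<close>
definition overlap ::
    "real \<Rightarrow> real \<Rightarrow> real \<Rightarrow> real \<Rightarrow> real \<Rightarrow> real \<Rightarrow> real \<Rightarrow> real \<Rightarrow> real \<Rightarrow> real" where
  "overlap g1 g2 x a1 a2 a3 b1 b2 b3 = (1 + field1 g1 g2 x * a3 + field2 g1 g2 x * b3
      + corr_xx g1 g2 x * a1 * b1 + corr_yy g1 g2 x * a2 * b2 + x * a3 * b3) / 4"

lemma overlap_coordinates:
  "Re (mtrace (rho_x3 g1 g2 x * kron (proj f) (proj g))) =
    ((1 + field1 g1 g2 x + field2 g1 g2 x + x) * (cmod (f 0))\<^sup>2 * (cmod (g 0))\<^sup>2
   + (1 + field1 g1 g2 x - field2 g1 g2 x - x) * (cmod (f 0))\<^sup>2 * (cmod (g 1))\<^sup>2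
   + (1 - field1 g1 g2 x + field2 g1 g2 x - x) * (cmod (f 1))\<^sup>2 * (cmod (g 0))\<^sup>2
   + (1 - field1 g1 g2 x - field2 g1 g2 x + x) * (cmod (f 1))\<^sup>2 * (cmod (g 1))\<^sup>2
   + corr_xx g1 g2 x * (2 * Re (cnj (f 0) * f 1)) * (2 * Re (cnj (g 0) * g 1))
   + corr_yy g1 g2 x * (2 * Im (cnj (f 0) * f 1)) * (2 * Im (cnj (g 0) * g 1))) / 4"
  unfolding rho_x3_mat kron_proj Let_def
  by (subst mat4_mult, simp_all)
     (simp add: mtrace_def sum_lessThan_4 cmod_power2, simp add: algebra_simps power2_eq_square)

lemma overlap_bloch:
  assumes nf: "(cmod (f 0))\<^sup>2 + (cmod (f 1))\<^sup>2 = 1" and ng: "(cmod (g 0))\<^sup>2 + (cmod (g 1))\<^sup>2 = 1"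
  shows "Re (mtrace (rho_x3 g1 g2 x * kron (proj f) (proj g))) =
     overlap g1 g2 x (bloch1 f) (bloch2 f) (bloch3 f) (bloch1 g) (bloch2 g) (bloch3 g)"
proof -
  define P0 where "P0 = (cmod (f 0))\<^sup>2"
  define Q0 where "Q0 = (cmod (g 0))\<^sup>2"
  have P1: "(cmod (f 1))\<^sup>2 = 1 - P0" using nf unfolding P0_def by simp
  have Q1: "(cmod (g 1))\<^sup>2 = 1 - Q0" using ng unfolding Q0_def by simp
  show ?thesis
    unfolding overlap_coordinates overlap_def bloch1_def bloch2_def bloch3_def P1 Q1
      P0_def[symmetric] Q0_def[symmetric]
    by (simp add: algebra_simps)
qed

text \<open>Each summand of the overlap is bounded by the modulus of its coefficient, so the overlap
  is bounded on the Bloch sphere; this makes the supremum defining g well behaved.\<close>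
lemma overlap_bounded:
  assumes "a1\<^sup>2 + a2\<^sup>2 + a3\<^sup>2 = 1" "b1\<^sup>2 + b2\<^sup>2 + b3\<^sup>2 = 1"
  shows "overlap g1 g2 x a1 a2 a3 b1 b2 b3 \<le> (1 + \<bar>field1 g1 g2 x\<bar> + \<bar>field2 g1 g2 x\<bar>
      + \<bar>corr_xx g1 g2 x\<bar> + \<bar>corr_yy g1 g2 x\<bar> + \<bar>x\<bar>) / 4"
proof -
  have coord: "\<bar>u\<bar> \<le> 1" if "u\<^sup>2 + v\<^sup>2 + w\<^sup>2 = 1" for u v w :: real
    using that zero_le_power2[of v] zero_le_power2[of w] abs_square_le_1[of u] by linarith
  have a: "\<bar>a1\<bar> \<le> 1" "\<bar>a2\<bar> \<le> 1" "\<bar>a3\<bar> \<le> 1"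
    using coord[of a1 a2 a3] coord[of a2 a1 a3] coord[of a3 a1 a2] assms(1) by (simp_all add: ac_simps)
  have b: "\<bar>b1\<bar> \<le> 1" "\<bar>b2\<bar> \<le> 1" "\<bar>b3\<bar> \<le> 1"
    using coord[of b1 b2 b3] coord[of b2 b1 b3] coord[of b3 b1 b2] assms(2) by (simp_all add: ac_simps)
  have scaled_le_abs: "k * y \<le> \<bar>k\<bar>" if "\<bar>y\<bar> \<le> 1" for k y :: real
  proof -
    have "k * y \<le> \<bar>k\<bar> * \<bar>y\<bar>" by (metis abs_ge_self abs_mult)
    also have "\<dots> \<le> \<bar>k\<bar>" using that by (simp add: mult_left_le)
    finally show ?thesis .
  qed
  have prod: "\<bar>u * v\<bar> \<le> 1" if "\<bar>u\<bar> \<le> 1" "\<bar>v\<bar> \<le> 1" for u v :: real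
    using that by (simp add: abs_mult mult_le_one)
  show ?thesis
    unfolding overlap_def mult.assoc
  proof (rule divide_right_mono)
    show "1 + field1 g1 g2 x * a3 + field2 g1 g2 x * b3 + corr_xx g1 g2 x * (a1 * b1)
        + corr_yy g1 g2 x * (a2 * b2) + x * (a3 * b3) \<le> 1 + \<bar>field1 g1 g2 x\<bar>
        + \<bar>field2 g1 g2 x\<bar> + \<bar>corr_xx g1 g2 x\<bar> + \<bar>corr_yy g1 g2 x\<bar> + \<bar>x\<bar>"
      using scaled_le_abs[OF a(3), of "field1 g1 g2 x"] scaled_le_abs[OF b(3), of "field2 g1 g2 x"]
        scaled_le_abs[OF prod[OF a(1) b(1)], of "corr_xx g1 g2 x"]
        scaled_le_abs[OF prod[OF a(2) b(2)], of "corr_yy g1 g2 x"]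
        scaled_le_abs[OF prod[OF a(3) b(3)], of x]
      by linarith
  qed simp
qed


section \<open>g as a supremum over pairs of Bloch vectors\<close>

lemma pure_state_proj:
  assumes "pure_qubit_state P"
  obtains f where "P = proj f" "(cmod (f 0))\<^sup>2 + (cmod (f 1))\<^sup>2 = 1"
proof -
  obtain \<psi> :: "complex vec" where "(\<Sum>i<2. (cmod (\<psi> $ i))\<^sup>2) = 1"
      "P = mat 2 2 (\<lambda>(i,j). \<psi> $ i * cnj (\<psi> $ j))"
    using assms unfolding pure_qubit_state_def by blast
  then show ?thesis using that[of "\<lambda>i. \<psi> $ i"] by (simp add: proj_def numeral_2_eq_2)
qed

lemma proj_pure_state:
  assumes "(cmod (f 0))\<^sup>2 + (cmod (f 1))\<^sup>2 = 1"
  shows "pure_qubit_state (proj f)"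
  unfolding pure_qubit_state_def
proof (intro exI[of _ "vec 2 f"] conjI)
  show "vec 2 f \<in> carrier_vec 2" by simp
  show "(\<Sum>i<2. (cmod (vec 2 f $ i))\<^sup>2) = 1" using assms by (simp add: numeral_2_eq_2)
  show "proj f = mat 2 2 (\<lambda>(i, j). vec 2 f $ i * cnj (vec 2 f $ j))"
    unfolding proj_def by (rule eq_matI) auto
qed

definition pure_pairs :: "(complex mat \<times> complex mat) set" where
  "pure_pairs = {(P, Q). pure_qubit_state P \<and> pure_qubit_state Q}"

lemma pure_pairs_nonempty: "pure_pairs \<noteq> {}"
proof -
  have "pure_qubit_state (proj (\<lambda>i. if i = 0 then 1 else 0))" by (rule proj_pure_state) simp
  then show ?thesis unfolding pure_pairs_def by blast
qed

lemma pure_pair_overlap: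
  assumes "PQ \<in> pure_pairs"
  obtains a1 a2 a3 b1 b2 b3 where "a1\<^sup>2 + a2\<^sup>2 + a3\<^sup>2 = 1" "b1\<^sup>2 + b2\<^sup>2 + b3\<^sup>2 = 1"
    "Re (mtrace (rho_x3 g1 g2 x * kron (fst PQ) (snd PQ))) = overlap g1 g2 x a1 a2 a3 b1 b2 b3"
proof -
  obtain P Q where PQ: "PQ = (P, Q)" "pure_qubit_state P" "pure_qubit_state Q"
    using assms unfolding pure_pairs_def by blast
  obtain f where f: "P = proj f" "(cmod (f 0))\<^sup>2 + (cmod (f 1))\<^sup>2 = 1"
    using pure_state_proj[OF PQ(2)] by blast
  obtain g where g: "Q = proj g" "(cmod (g 0))\<^sup>2 + (cmod (g 1))\<^sup>2 = 1"
    using pure_state_proj[OF PQ(3)] by blast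
  show ?thesis
    using that[OF bloch_norm[OF f(2)] bloch_norm[OF g(2)]] overlap_bloch[OF f(2) g(2)] PQ f g by simp
qed

lemma gmax_pure_pairs: "gmax \<rho> = (SUP PQ \<in> pure_pairs. Re (mtrace (\<rho> * kron (fst PQ) (snd PQ))))"
  unfolding gmax_def pure_pairs_def by simp

lemma overlaps_bdd_above:
  "bdd_above ((\<lambda>PQ. Re (mtrace (rho_x3 g1 g2 x * kron (fst PQ) (snd PQ)))) ` pure_pairs)"
proof (rule bdd_aboveI2)
  fix PQ assume "PQ \<in> pure_pairs"
  then obtain a1 a2 a3 b1 b2 b3 where "a1\<^sup>2 + a2\<^sup>2 + a3\<^sup>2 = 1" "b1\<^sup>2 + b2\<^sup>2 + b3\<^sup>2 = 1"
    "Re (mtrace (rho_x3 g1 g2 x * kron (fst PQ) (snd PQ))) = overlap g1 g2 x a1 a2 a3 b1 b2 b3"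
    by (rule pure_pair_overlap)
  then show "Re (mtrace (rho_x3 g1 g2 x * kron (fst PQ) (snd PQ))) \<le> (1 + \<bar>field1 g1 g2 x\<bar>
      + \<bar>field2 g1 g2 x\<bar> + \<bar>corr_xx g1 g2 x\<bar> + \<bar>corr_yy g1 g2 x\<bar> + \<bar>x\<bar>) / 4"
    using overlap_bounded by simp
qed

lemma gmax_le_overlap_bound:
  assumes "\<And>a1 a2 a3 b1 b2 b3. a1\<^sup>2 + a2\<^sup>2 + a3\<^sup>2 = 1 \<Longrightarrow> b1\<^sup>2 + b2\<^sup>2 + b3\<^sup>2 = 1 \<Longrightarrow>
      overlap g1 g2 x a1 a2 a3 b1 b2 b3 \<le> U"
  shows "gmax (rho_x3 g1 g2 x) \<le> U"
  unfolding gmax_pure_pairs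
proof (rule cSUP_least[OF pure_pairs_nonempty])
  fix PQ assume "PQ \<in> pure_pairs"
  then obtain a1 a2 a3 b1 b2 b3 where "a1\<^sup>2 + a2\<^sup>2 + a3\<^sup>2 = 1" "b1\<^sup>2 + b2\<^sup>2 + b3\<^sup>2 = 1"
    "Re (mtrace (rho_x3 g1 g2 x * kron (fst PQ) (snd PQ))) = overlap g1 g2 x a1 a2 a3 b1 b2 b3"
    by (rule pure_pair_overlap)
  then show "Re (mtrace (rho_x3 g1 g2 x * kron (fst PQ) (snd PQ))) \<le> U" using assms by simp
qed

lemma overlap_le_gmax:
  assumes "(cmod (f 0))\<^sup>2 + (cmod (f 1))\<^sup>2 = 1"
  shows "overlap g1 g2 x (bloch1 f) (bloch2 f) (bloch3 f) (bloch1 f) (bloch2 f) (bloch3 f)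
           \<le> gmax (rho_x3 g1 g2 x)"
proof -
  have "(proj f, proj f) \<in> pure_pairs" using proj_pure_state[OF assms] unfolding pure_pairs_def by simp
  from cSUP_upper[OF this overlaps_bdd_above[of g1 g2 x]]
  show ?thesis unfolding gmax_pure_pairs using overlap_bloch[OF assms assms] by simp
qed

text \<open>A real state with Bloch vector (sqrt(1-t^2), 0, t) in the x-z plane.\<close>
definition real_state :: "real \<Rightarrow> nat \<Rightarrow> complex" where
  "real_state t = (\<lambda>i. if i = 0 then complex_of_real (sqrt ((1+t)/2))
                                else complex_of_real (sqrt ((1-t)/2)))"

lemma real_state_bloch:
  assumes "-1 \<le> t" "t \<le> 1"
  shows "(cmod (real_state t 0))\<^sup>2 + (cmod (real_state t 1))\<^sup>2 = 1" "bloch2 (real_state t) = 0"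
    "bloch3 (real_state t) = t" "bloch1 (real_state t) * bloch1 (real_state t) = 1 - t\<^sup>2"
proof -
  have nonneg: "0 \<le> (1+t)/2" "0 \<le> (1-t)/2" using assms by auto
  have c0: "(cmod (real_state t 0))\<^sup>2 = (1+t)/2" unfolding real_state_def using nonneg by simp
  have c1: "(cmod (real_state t 1))\<^sup>2 = (1-t)/2" unfolding real_state_def using nonneg by simp
  show "(cmod (real_state t 0))\<^sup>2 + (cmod (real_state t 1))\<^sup>2 = 1" unfolding c0 c1 by (simp add: field_simps)
  show "bloch3 (real_state t) = t" unfolding bloch3_def c0 c1 by (simp add: field_simps)
  show "bloch2 (real_state t) = 0" unfolding bloch2_def real_state_def by simp
  have "bloch1 (real_state t) * bloch1 (real_state t) = 4 * ((sqrt ((1+t)/2))\<^sup>2 * (sqrt ((1-t)/2))\<^sup>2)"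
    unfolding bloch1_def real_state_def by (simp add: power2_eq_square algebra_simps)
  also have "\<dots> = 1 - t\<^sup>2" using nonneg by (simp add: power2_eq_square field_simps)
  finally show "bloch1 (real_state t) * bloch1 (real_state t) = 1 - t\<^sup>2" .
qed

lemma real_state_lower_bound:
  assumes "-1 \<le> t" "t \<le> 1"
  shows "(1 + (field1 g1 g2 x + field2 g1 g2 x) * t + corr_xx g1 g2 x * (1 - t\<^sup>2) + x * t\<^sup>2) / 4
           \<le> gmax (rho_x3 g1 g2 x)"
proof -
  let ?f = "real_state t"
  have "overlap g1 g2 x (bloch1 ?f) (bloch2 ?f) (bloch3 ?f) (bloch1 ?f) (bloch2 ?f) (bloch3 ?f) =
      (1 + (field1 g1 g2 x + field2 g1 g2 x) * t + corr_xx g1 g2 x * (1 - t\<^sup>2) + x * t\<^sup>2) / 4"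
    unfolding overlap_def real_state_bloch(2-3)[OF assms] mult.assoc
    unfolding real_state_bloch(4)[OF assms]
    by (simp add: power2_eq_square algebra_simps)
  then show ?thesis using overlap_le_gmax[OF real_state_bloch(1)[OF assms], of g1 g2 x] by simp
qed


section \<open>The two algebraic estimates\<close>

text \<open>The
  defect is an explicit sum of squares with nonnegative weights:
  (A-x)((a3+b3)/2 - e)^2 + (A-B)((a2+b2)/2)^2 + 2A((a1-b1)/2)^2 + (A+B)((a2-b2)/2)^2
  + (A+x)((a3-b3)/2)^2 with e = m/(A-x).\<close>
lemma symmetric_form_bound:
  fixes a1 a2 a3 b1 b2 b3 m A B x :: real
  assumes sphere: "a1\<^sup>2 + a2\<^sup>2 + a3\<^sup>2 + b1\<^sup>2 + b2\<^sup>2 + b3\<^sup>2 = 2"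
    and "B \<le> A" "0 \<le> A + B" "0 \<le> A + x" "0 < A - x"
  shows "m*(a3+b3) + A*a1*b1 + B*a2*b2 + x*a3*b3 \<le> A + m\<^sup>2/(A-x)"
proof -
  define e where "e = m/(A-x)"
  have me: "m = e*(A-x)" using assms(5) unfolding e_def by simp
  have m2: "m\<^sup>2/(A-x) = e\<^sup>2*(A-x)" using assms(5) unfolding me by (simp add: power2_eq_square)
  have identity: "A + e\<^sup>2*(A-x) - (e*(A-x)*(a3+b3) + A*a1*b1 + B*a2*b2 + x*a3*b3) =
    (A-x)*((a3+b3)/2 - e)\<^sup>2 + (A-B)*((a2+b2)/2)\<^sup>2 + 2*A*((a1-b1)/2)\<^sup>2 + (A+B)*((a2-b2)/2)\<^sup>2
    + (A+x)*((a3-b3)/2)\<^sup>2 + A*(1 - (a1\<^sup>2+a2\<^sup>2+a3\<^sup>2+b1\<^sup>2+b2\<^sup>2+b3\<^sup>2)/2)"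
    by (simp add: field_simps power2_eq_square)
  have "0 \<le> A" using assms by linarith
  have "0 \<le> (A-x)*((a3+b3)/2 - e)\<^sup>2" "0 \<le> (A-B)*((a2+b2)/2)\<^sup>2" "0 \<le> 2*A*((a1-b1)/2)\<^sup>2"
      "0 \<le> (A+B)*((a2-b2)/2)\<^sup>2" "0 \<le> (A+x)*((a3-b3)/2)\<^sup>2"
    using assms \<open>0 \<le> A\<close> by simp_all
  moreover have "A*(1 - (a1\<^sup>2+a2\<^sup>2+a3\<^sup>2+b1\<^sup>2+b2\<^sup>2+b3\<^sup>2)/2) = 0" using sphere by simp
  moreover have "m*(a3+b3) = e*(A-x)*(a3+b3)" using me by simp
  ultimately show ?thesis using identity unfolding m2 by linarith
qed

text \<open>The scalar data of the problem: s = sin gamma_1, c = cos gamma_1 and r = sqrt 2, with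
  gamma_1 in [pi/4, pi/2].\<close>
locale angle_data =
  fixes s c r :: real
  assumes pythagoras: "s\<^sup>2 + c\<^sup>2 = 1" and r_sq: "r\<^sup>2 = 2" and r_pos: "0 < r"
    and s_pos: "0 < s" and s_le_1: "s \<le> 1" and c_nonneg: "0 \<le> c" and s_ge_c: "1 \<le> 2*s\<^sup>2"
begin

definition "D = 2 - s\<^sup>2"
definition "x_opt = 2*s*(s-r)/(4 - 2*s\<^sup>2)"
definition "V_opt = (2 - 2*s\<^sup>2 + r*s)\<^sup>2/(4 - 2*s\<^sup>2)\<^sup>2"
definition "t_opt = c*(r-s)/(2-s\<^sup>2)"

lemma D_ge_1: "1 \<le> D"
proof -
  have "s\<^sup>2 \<le> 1" using s_pos s_le_1 by (simp add: power_le_one)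
  then show ?thesis unfolding D_def by simp
qed

lemma r_bounds: "1 < r" "r < 2"
proof -
  show "1 < r"
  proof (rule ccontr)
    assume "\<not> 1 < r" then have "r*r \<le> 1" using r_pos by (simp add: mult_le_one)
    then show False using r_sq by (simp add: power2_eq_square)
  qed
  show "r < 2"
  proof (rule ccontr)
    assume "\<not> r < 2" then have "2*2 \<le> r*r" by (intro mult_mono) auto
    then show False using r_sq by (simp add: power2_eq_square)
  qed
qed

lemma x_opt_eq: "x_opt = s*(s-r)/D"
proof -
  have "4 - 2*s\<^sup>2 = 2*D" unfolding D_def by simp
  then show ?thesis unfolding x_opt_def by simp
qed

lemma x_opt_range: "-1 \<le> x_opt" "x_opt \<le> 1"
proof -
  have D: "0 < D" using D_ge_1 by simp
  have "s*(s-r) \<le> 0" using s_pos s_le_1 r_bounds by (simp add: mult_nonneg_nonpos)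
  then show "x_opt \<le> 1" unfolding x_opt_eq using D by (auto simp: divide_nonpos_pos)
  have "r*s \<le> r" using s_le_1 r_pos by simp
  then have "-D \<le> s*(s-r)" unfolding D_def using r_bounds
    by (simp only: algebra_simps power2_eq_square)
  then show "-1 \<le> x_opt" unfolding x_opt_eq using D by (simp add: field_simps)
qed

text \<open>The hypotheses of the sum-of-squares bound for the coefficients A = s^2 - x c^2 and
  B = c^2 - x s^2 at any admissible x.\<close>
lemma weights_nonneg:
  assumes "-1 \<le> x" "x \<le> 1"
  shows "c\<^sup>2 - x*s\<^sup>2 \<le> s\<^sup>2 - x*c\<^sup>2" "0 \<le> (s\<^sup>2 - x*c\<^sup>2) + (c\<^sup>2 - x*s\<^sup>2)" "0 \<le> (s\<^sup>2 - x*c\<^sup>2) + x"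
proof -
  have "0 \<le> (s\<^sup>2 - c\<^sup>2)*(1+x)" using pythagoras s_ge_c assms by simp
  then show "c\<^sup>2 - x*s\<^sup>2 \<le> s\<^sup>2 - x*c\<^sup>2" by (simp add: algebra_simps)
  have "(s\<^sup>2 - x*c\<^sup>2) + (c\<^sup>2 - x*s\<^sup>2) = (s\<^sup>2+c\<^sup>2)*(1-x)" by (simp add: algebra_simps)
  then show "0 \<le> (s\<^sup>2 - x*c\<^sup>2) + (c\<^sup>2 - x*s\<^sup>2)" using pythagoras assms by simp
  have "(s\<^sup>2 - x*c\<^sup>2) + x = s\<^sup>2*(1+x) + x*(1 - (s\<^sup>2+c\<^sup>2))" by (simp add: algebra_simps)
  then show "0 \<le> (s\<^sup>2 - x*c\<^sup>2) + x" using pythagoras assms by simp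
qed

lemma A_minus_x_opt: "(s\<^sup>2 - x_opt*c\<^sup>2) - x_opt = r*s"
proof -
  have c2: "c\<^sup>2 = 1 - s\<^sup>2" using pythagoras by simp
  have "x_opt*D = s*(s-r)" unfolding x_opt_eq using D_ge_1 by simp
  then show ?thesis unfolding c2 D_def by (simp add: algebra_simps power2_eq_square)
qed

lemma V_opt_eq: "4*V_opt = (2*c\<^sup>2 + r*s)\<^sup>2/D\<^sup>2"
proof -
  have num: "2 - 2*s\<^sup>2 + r*s = 2*c\<^sup>2 + r*s" using pythagoras by simp
  have den: "4 - 2*s\<^sup>2 = 2*D" unfolding D_def by simp
  show ?thesis unfolding V_opt_def num den by (simp add: power_mult_distrib)
qed

text \<open>At x_opt the sum-of-squares bound 1 + A + m^2/(A - x) equals exactly 4 V_opt.\<close>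
lemma bound_at_x_opt: "1 + (s\<^sup>2 - x_opt*c\<^sup>2) + (s*c*(1+x_opt))\<^sup>2/(r*s) = 4*V_opt"
proof -
  have D: "D \<noteq> 0" using D_ge_1 by simp
  have numerator: "D\<^sup>2 + s\<^sup>2*D\<^sup>2 - s*(s-r)*c\<^sup>2*D + s*c\<^sup>2*r*(r-s)\<^sup>2 = (2*c\<^sup>2+r*s)\<^sup>2"
    unfolding D_def using pythagoras r_sq by Groebner_Basis.algebra
  have one_plus: "1 + x_opt = r*(r-s)/D" unfolding x_opt_eq using D r_sq
    by (simp add: field_simps D_def algebra_simps power2_eq_square)
  have "1 + (s\<^sup>2 - x_opt*c\<^sup>2) + (s*c*(1+x_opt))\<^sup>2/(r*s) =
        (D\<^sup>2 + s\<^sup>2*D\<^sup>2 - s*(s-r)*c\<^sup>2*D + s*c\<^sup>2*r*(r-s)\<^sup>2)/D\<^sup>2"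
    unfolding one_plus unfolding x_opt_eq using D r_pos s_pos r_sq
    by (simp add: field_simps power2_eq_square) Groebner_Basis.algebra
  then show ?thesis unfolding V_opt_eq numerator .
qed

lemma t_opt_range: "-1 \<le> t_opt" "t_opt \<le> 1"
proof -
  have D: "0 < D" using D_ge_1 by simp
  have tD: "t_opt = c*(r-s)/D" unfolding t_opt_def D_def by simp
  have "0 \<le> c*(r-s)" using c_nonneg r_bounds s_le_1 by simp
  then have "0 \<le> c*(r-s)/D" using D by simp
  then show "-1 \<le> t_opt" unfolding tD by linarith
  have "c*(r-s) \<le> c*r" using c_nonneg s_pos by (simp add: mult_left_mono)
  also have "c*r \<le> D"
  proof -
    have "(c - r/2)\<^sup>2 + 1/2 = D - c*r" unfolding D_def using pythagoras r_sq
      by Groebner_Basis.algebra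
    moreover have "0 \<le> (c - r/2)\<^sup>2 + 1/2" by simp
    ultimately show ?thesis by simp
  qed
  finally show "t_opt \<le> 1" unfolding tD using D by simp
qed

text \<open>The symmetric state with z-component t_opt attains 4 V_opt, independently of x: the
  coefficient of x vanishes identically.\<close>
lemma t_opt_value: "1 + 2*(s*c*(1+x))*t_opt + (s\<^sup>2 - x*c\<^sup>2)*(1-t_opt\<^sup>2) + x*t_opt\<^sup>2 = 4*V_opt"
proof -
  have D: "D \<noteq> 0" using D_ge_1 by simp
  have tD: "t_opt = c*(r-s)/D" unfolding t_opt_def D_def by simp
  define N where "N = c*(r-s)"
  have x_coeff: "2*s*c*N*D - c\<^sup>2*(D\<^sup>2 - N\<^sup>2) + N\<^sup>2 = 0"
    unfolding N_def D_def using pythagoras r_sq by Groebner_Basis.algebra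
  have const: "D\<^sup>2 + 2*s*c*N*D + s\<^sup>2*(D\<^sup>2-N\<^sup>2) = (2*c\<^sup>2+r*s)\<^sup>2"
    unfolding N_def D_def using pythagoras r_sq by Groebner_Basis.algebra
  have "1 + 2*(s*c*(1+x))*t_opt + (s\<^sup>2 - x*c\<^sup>2)*(1-t_opt\<^sup>2) + x*t_opt\<^sup>2 =
     ((D\<^sup>2 + 2*s*c*N*D + s\<^sup>2*(D\<^sup>2-N\<^sup>2)) + x*(2*s*c*N*D - c\<^sup>2*(D\<^sup>2 - N\<^sup>2) + N\<^sup>2))/D\<^sup>2"
    unfolding tD N_def[symmetric] using D by (simp add: field_simps power2_eq_square)
  then show ?thesis unfolding x_coeff const V_opt_eq by simp
qed

end


section \<open>The minimum of g along the family rho(x3)\<close>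

definition min_value :: "real \<Rightarrow> real" where
  "min_value g1 = (1 + cos (2*g1) + sqrt 2 * sin g1)\<^sup>2 / (3 + cos (2*g1))\<^sup>2"

definition minimiser :: "real \<Rightarrow> real" where
  "minimiser g1 = 2 * sin g1 * (sin g1 - sqrt 2) / (3 + cos (2*g1))"

lemma angle_data_sin_cos:
  assumes "g1 \<in> {pi/4 .. pi/2}"
  shows "angle_data (sin g1) (cos g1) (sqrt 2)"
proof
  have g: "pi/4 \<le> g1" "g1 \<le> pi/2" using assms by auto
  have "sin (pi/4) \<le> sin g1" using g sin_mono_le_eq[of "pi/4" g1] pi_gt_zero by auto
  then have sin_ge: "sqrt 2 / 2 \<le> sin g1" by (simp add: sin_45)
  show "(sin g1)\<^sup>2 + (cos g1)\<^sup>2 = 1" by simp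
  show "(sqrt 2)\<^sup>2 = (2::real)" by simp
  show "0 < sqrt (2::real)" by simp
  have "0 < sqrt 2 / (2::real)" by simp
  then show "0 < sin g1" using sin_ge by linarith
  show "sin g1 \<le> 1" by simp
  show "0 \<le> cos g1" using g pi_gt_zero by (intro cos_ge_zero) auto
  have "(sqrt 2 / 2)\<^sup>2 \<le> (sin g1)\<^sup>2" using sin_ge by (intro power_mono) auto
  then show "1 \<le> 2 * (sin g1)\<^sup>2" by (simp add: power_divide)
qed

text \<open>The closed forms of the statement agree with the locale quantities (cos 2g = 1 - 2 sin^2 g).\<close>
lemma closed_forms:
  assumes "g1 \<in> {pi/4 .. pi/2}"
  shows "min_value g1 = angle_data.V_opt (sin g1) (sqrt 2)"
    and "minimiser g1 = angle_data.x_opt (sin g1) (sqrt 2)"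
proof -
  interpret angle_data "sin g1" "cos g1" "sqrt 2" using angle_data_sin_cos[OF assms] .
  show "min_value g1 = V_opt" "minimiser g1 = x_opt"
    unfolding min_value_def minimiser_def V_opt_def x_opt_def cos_double_sin
    by (simp_all add: algebra_simps)
qed

lemma coefficients_complementary:
  "field1 g1 (pi/2-g1) x = sin g1 * cos g1 * (1+x)" "field2 g1 (pi/2-g1) x = sin g1 * cos g1 * (1+x)"
  "corr_xx g1 (pi/2-g1) x = (sin g1)\<^sup>2 - x*(cos g1)\<^sup>2"
  "corr_yy g1 (pi/2-g1) x = (cos g1)\<^sup>2 - x*(sin g1)\<^sup>2"
  unfolding field1_def field2_def corr_xx_def corr_yy_def
  by (simp_all add: cos_diff sin_diff power2_eq_square algebra_simps)

text \<open>Lower bound: V is attained by a symmetric product state for every x3.\<close>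
lemma min_value_le_gmax:
  assumes "g1 \<in> {pi/4 .. pi/2}"
  shows "min_value g1 \<le> gmax (rho_x3 g1 (pi/2-g1) x)"
proof -
  interpret angle_data "sin g1" "cos g1" "sqrt 2" using angle_data_sin_cos[OF assms] .
  have "min_value g1 = (1 + 2*(sin g1 * cos g1 * (1+x))*t_opt + ((sin g1)\<^sup>2 - x*(cos g1)\<^sup>2)*(1-t_opt\<^sup>2)
      + x*t_opt\<^sup>2)/4"
    unfolding closed_forms[OF assms] using t_opt_value[of x] by simp
  also have "\<dots> \<le> gmax (rho_x3 g1 (pi/2-g1) x)"
    using real_state_lower_bound[OF t_opt_range, of g1 "pi/2-g1" x]
    unfolding coefficients_complementary by (simp add: algebra_simps)
  finally show ?thesis .
qed

lemma gmax_at_minimiser_le: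
  assumes "g1 \<in> {pi/4 .. pi/2}"
  shows "gmax (rho_x3 g1 (pi/2-g1) (minimiser g1)) \<le> min_value g1"
proof (rule gmax_le_overlap_bound)
  interpret angle_data "sin g1" "cos g1" "sqrt 2" using angle_data_sin_cos[OF assms] .
  fix a1 a2 a3 b1 b2 b3 :: real
  assume "a1\<^sup>2 + a2\<^sup>2 + a3\<^sup>2 = 1" "b1\<^sup>2 + b2\<^sup>2 + b3\<^sup>2 = 1"
  then have sphere: "a1\<^sup>2 + a2\<^sup>2 + a3\<^sup>2 + b1\<^sup>2 + b2\<^sup>2 + b3\<^sup>2 = 2" by simp
  have pos: "0 < (sin g1)\<^sup>2 - x_opt*(cos g1)\<^sup>2 - x_opt"
    unfolding A_minus_x_opt using s_pos by simp
  from symmetric_form_bound[OF sphere weights_nonneg[OF x_opt_range] pos,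
      of "sin g1 * cos g1 * (1 + x_opt)"]
  show "overlap g1 (pi/2-g1) (minimiser g1) a1 a2 a3 b1 b2 b3 \<le> min_value g1"
    unfolding overlap_def coefficients_complementary closed_forms[OF assms] A_minus_x_opt
    using bound_at_x_opt by (simp add: algebra_simps)
qed

lemma minimiser_range:
  assumes "g1 \<in> {pi/4 .. pi/2}"
  shows "minimiser g1 \<in> {-1 .. 1}"
  using angle_data.x_opt_range[OF angle_data_sin_cos[OF assms]] unfolding closed_forms[OF assms] by simp


section \<open>Monotonicity in gamma_1 and the extreme case\<close>

text \<open>min_value is the square of (2 - 2 s^2 + r s)/(4 - 2 s^2) with s = sin gamma_1, and this
  fraction increases strictly with s on (0, 1]: the cross difference factors as
  2 r (s2 - s1)(r - s1)(r - s2).\<close>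
lemma sqrt_min_value_strict_mono:
  fixes s1 s2 r :: real
  assumes "r\<^sup>2 = 2" "0 < r" "0 < s1" "s1 < s2" "s2 \<le> 1"
  shows "(2 - 2*s1\<^sup>2 + r*s1)/(4 - 2*s1\<^sup>2) < (2 - 2*s2\<^sup>2 + r*s2)/(4 - 2*s2\<^sup>2)"
proof -
  have r_gt_1: "1 < r"
  proof (rule ccontr)
    assume "\<not> 1 < r" then have "r*r \<le> 1" using assms by (simp add: mult_le_one)
    then show False using assms by (simp add: power2_eq_square)
  qed
  have "s1*s1 \<le> 1" "s2*s2 \<le> 1" using assms by (simp_all add: mult_le_one)
  then have den: "0 < 4 - 2*s1\<^sup>2" "0 < 4 - 2*s2\<^sup>2" by (simp_all add: power2_eq_square)
  have "(s2 - s1)*(2*r)*((r - s1)*(r - s2)) = (s2 - s1)*(2*r\<^sup>2*r - 2*r\<^sup>2*(s1+s2) + 2*r*s1*s2)"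
    by (simp add: algebra_simps power2_eq_square)
  also have "\<dots> = (s2 - s1)*(4*r - 4*(s1+s2) + 2*r*s1*s2)" using assms(1) by simp
  finally have cross: "(2 - 2*s2\<^sup>2 + r*s2)*(4 - 2*s1\<^sup>2) - (2 - 2*s1\<^sup>2 + r*s1)*(4 - 2*s2\<^sup>2)
      = (s2 - s1)*(2*r)*((r - s1)*(r - s2))"
    by (simp add: algebra_simps power2_eq_square)
  have "0 < (s2 - s1)*(2*r)*((r - s1)*(r - s2))" using assms r_gt_1 by (intro mult_pos_pos) auto
  then have "(2 - 2*s1\<^sup>2 + r*s1)*(4 - 2*s2\<^sup>2) < (2 - 2*s2\<^sup>2 + r*s2)*(4 - 2*s1\<^sup>2)"
    using cross by linarith
  then show ?thesis using den by (simp add: divide_less_eq less_divide_eq field_simps)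
qed

lemma min_value_strict_mono: "strict_mono_on {pi/4 .. pi/2} min_value"
proof (rule strict_mono_onI)
  fix a b :: real assume a: "a \<in> {pi/4 .. pi/2}" and b: "b \<in> {pi/4 .. pi/2}" and "a < b"
  interpret angle_data "sin a" "cos a" "sqrt 2" using angle_data_sin_cos[OF a] .
  have sin_less: "sin a < sin b" using a b \<open>a < b\<close> sin_mono_less_eq[of a b] pi_gt_zero by auto
  have square: "min_value g = ((2 - 2*(sin g)\<^sup>2 + sqrt 2 * sin g)/(4 - 2*(sin g)\<^sup>2))\<^sup>2" for g
    unfolding min_value_def cos_double_sin by (simp add: power_divide algebra_simps)
  have "(sin a)\<^sup>2 \<le> 1" by (simp add: abs_square_le_1)
  then have nonneg: "0 \<le> (2 - 2*(sin a)\<^sup>2 + sqrt 2 * sin a)/(4 - 2*(sin a)\<^sup>2)"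
    using s_pos by (intro divide_nonneg_nonneg) auto
  show "min_value a < min_value b"
    unfolding square
    using power_strict_mono[OF sqrt_min_value_strict_mono[OF r_sq r_pos s_pos sin_less] nonneg, of 2]
    by simp
qed

lemma values_at_pi_4: "min_value (pi/4) = 4/9" "minimiser (pi/4) = -1/3"
proof -
  have c: "cos (2*(pi/4)) = 0" by simp
  show "min_value (pi/4) = 4/9" unfolding min_value_def c sin_45 by (simp add: power2_eq_square)
  show "minimiser (pi/4) = -1/3" unfolding minimiser_def c sin_45 by (simp add: algebra_simps)
qed

theorem mainTheorem4:
  shows "(\<forall>g1 \<in> {pi/4 .. pi/2}.
           let g2 = pi/2 - g1;
               V = (1 + cos (2*g1) + sqrt 2 * sin g1)\<^sup>2 / (3 + cos (2*g1))\<^sup>2;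
               xs = 2 * sin g1 * (sin g1 - sqrt 2) / (3 + cos (2*g1))
           in xs \<in> {-1 .. 1} \<and> gmax (rho_x3 g1 g2 xs) = V \<and>
              (\<forall>x3 \<in> {-1 .. 1}. V \<le> gmax (rho_x3 g1 g2 x3)))
       \<and> strict_mono_on {pi/4 .. pi/2}
           (\<lambda>g1. (1 + cos (2*g1) + sqrt 2 * sin g1)\<^sup>2 / (3 + cos (2*g1))\<^sup>2)
       \<and> (1 + cos (2*(pi/4)) + sqrt 2 * sin (pi/4))\<^sup>2 / (3 + cos (2*(pi/4)))\<^sup>2 = 4/9
       \<and> 2 * sin (pi/4) * (sin (pi/4) - sqrt 2) / (3 + cos (2*(pi/4))) = -1/3"
proof -
  have "\<forall>g1 \<in> {pi/4 .. pi/2}. minimiser g1 \<in> {-1 .. 1}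
      \<and> gmax (rho_x3 g1 (pi/2-g1) (minimiser g1)) = min_value g1
      \<and> (\<forall>x3 \<in> {-1 .. 1}. min_value g1 \<le> gmax (rho_x3 g1 (pi/2-g1) x3))"
    using minimiser_range min_value_le_gmax gmax_at_minimiser_le by (blast intro: antisym)
  with min_value_strict_mono values_at_pi_4 show ?thesis
    unfolding Let_def min_value_def[abs_def] minimiser_def[abs_def] by (simp only: simp_thms)
qed

end
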